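(* Let $\mathcal{G}=(V,E,\lambda)$ be a temporal graph, $s\in V$, and $v\in V$. Suppose $(u_i,a_i,d_i)$ is a triplet at $v$ corresponding to a valid bi-path between $s$ and $v$, i.e., there is a bi-path between $s$ and $v$ whose last edge is $u_iv$, whose temporal path from $s$ to $v$ arrives at $v$ at time at most $a_i$, and whose temporal path from $v$ to $s$ departs from $v$ at time at least $d_i$. Let $w\neq u_i$ be a neighbor of $v$, and let $a_i'=\min\{t\in\lambda(vw)\mid t\ge a_i\}$ and $d_i'=\max\{t\in\lambda(vw)\mid t\le d_i\}$. If both sets are nonempty, then the triplet $(v,a_i',d_i')$ at $w$ corresponds to a valid bi-path between $s$ and $w$ (i.e., there is a bi-path between $s$ and $w$ whose last edge is $vw$, arriving at $w$ by time $a_i'$ and departing from $w$ at time $d_i'$ or later).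
   Context: A temporal graph is $\mathcal{G}=(V,E,\lambda)$ with $V$ finite, $E$ undirected edges, $\lambda:E\to 2^{\mathbb{N}}$ the time labels. A (non-strict) temporal path is a sequence of pairs $(e_i,t_i)$, $t_i\in\lambda(e_i)$, such that $\langle e_i\rangle$ is a path in $(V,E)$ and $\langle t_i\rangle$ is non-decreasing. A bi-path between $x$ and $y$ is a pair $(p_1,p_2)$ where $p_1$ is a temporal path from $x$ to $y$, $p_2$ is a temporal path from $y$ to $x$, and $p_2$ traverses the same underlying path as $p_1$ in reverse. The trivial bi-path from $s$ to itself corresponds to the triplet $(\bot,-\infty,\infty)$. *)

theory Defs
  imports "HOL-Library.Extended_Real"
begin

definition temporal_graph :: "'v set \<Rightarrow> 'v set set \<Rightarrow> bool" where
  "temporal_graph V E \<longleftrightarrow> finite V \<and>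
     (\<forall>e\<in>E. \<exists>x y. x \<in> V \<and> y \<in> V \<and> x \<noteq> y \<and> e = {x, y})"

definition graph_path :: "'v set set \<Rightarrow> 'v list \<Rightarrow> bool" where
  "graph_path E xs \<longleftrightarrow> xs \<noteq> [] \<and>
     (\<forall>i. Suc i < length xs \<longrightarrow> {xs ! i, xs ! Suc i} \<in> E)"

text \<open>The underlying path is xs = [s = x0, ..., x(k-1) = u, xk = v] (k \<ge> 1);
  edge i is {xs!i, xs!(i+1)}, i < k.  f i is the time at which the forward
  temporal path (s to v) uses edge i, g i the time at which the backward temporal
  path (v to s, same edges in reverse order) uses edge i.\<close>

definition bipath_with :: "'v set set \<Rightarrow> ('v set \<Rightarrow> nat set) \<Rightarrow> 'v \<Rightarrow> 'v \<Rightarrow> 'v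
    \<Rightarrow> ereal \<Rightarrow> ereal \<Rightarrow> bool" where
  "bipath_with E lab s v u a d \<longleftrightarrow>
     (\<exists>xs f g. graph_path E xs \<and> length xs \<ge> 2 \<and>
        hd xs = s \<and> last xs = v \<and> xs ! (length xs - 2) = u \<and>
        (\<forall>i. i < length xs - 1 \<longrightarrow> f i \<in> lab {xs ! i, xs ! Suc i}) \<and>
        (\<forall>i j. i \<le> j \<and> j < length xs - 1 \<longrightarrow> f i \<le> f j) \<and>
        (\<forall>i. i < length xs - 1 \<longrightarrow> g i \<in> lab {xs ! i, xs ! Suc i}) \<and>
        (\<forall>i j. i \<le> j \<and> j < length xs - 1 \<longrightarrow> g j \<le> g i) \<and>
        ereal (f (length xs - 2)) \<le> a \<and>
        d \<le> ereal (g (length xs - 2)))"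

text \<open>A triplet (u,a,d) at v (u = None encodes \<bottom>) corresponds to a valid
  bi-path between s and v: either it is the trivial triplet (\<bottom>,-\<infinity>,\<infinity>) at s,
  or a non-trivial bi-path as above exists.\<close>

definition valid_triplet :: "'v set set \<Rightarrow> ('v set \<Rightarrow> nat set) \<Rightarrow> 'v \<Rightarrow> 'v
    \<Rightarrow> 'v option \<Rightarrow> ereal \<Rightarrow> ereal \<Rightarrow> bool" where
  "valid_triplet E lab s v u a d \<longleftrightarrow>
     (v = s \<and> u = None \<and> a = -\<infinity> \<and> d = \<infinity>) \<or>
     (\<exists>u'. u = Some u' \<and> bipath_with E lab s v u' a d)"

end

theory Submission
  imports Defs
begin

text \<open>Append the edge vw to a bi-path between s and v: the forward path leaves v at
  time a' \<ge> a, which is no earlier than its arrival at v, and the backward path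
  enters v at time d' \<le> d, which is no later than its departure from v.  For the
  trivial triplet at s the new bi-path is the single edge sw.\<close>

definition temporal_bipath :: "'v set set \<Rightarrow> ('v set \<Rightarrow> nat set) \<Rightarrow> 'v list
    \<Rightarrow> (nat \<Rightarrow> nat) \<Rightarrow> (nat \<Rightarrow> nat) \<Rightarrow> bool" where
  "temporal_bipath E lab xs f g \<longleftrightarrow> graph_path E xs \<and>
     (\<forall>i. i < length xs - 1 \<longrightarrow> f i \<in> lab {xs ! i, xs ! Suc i}) \<and>
     (\<forall>i j. i \<le> j \<and> j < length xs - 1 \<longrightarrow> f i \<le> f j) \<and>
     (\<forall>i. i < length xs - 1 \<longrightarrow> g i \<in> lab {xs ! i, xs ! Suc i}) \<and>
     (\<forall>i j. i \<le> j \<and> j < length xs - 1 \<longrightarrow> g j \<le> g i)"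

lemma temporal_bipath_singleton: "temporal_bipath E lab [s] f g"
  by (simp add: temporal_bipath_def graph_path_def)

lemma bipath_with_iff_temporal_bipath:
  "bipath_with E lab s v u a d \<longleftrightarrow>
     (\<exists>xs f g. temporal_bipath E lab xs f g \<and> length xs \<ge> 2 \<and>
        hd xs = s \<and> last xs = v \<and> xs ! (length xs - 2) = u \<and>
        ereal (f (length xs - 2)) \<le> a \<and> d \<le> ereal (g (length xs - 2)))"
  unfolding bipath_with_def temporal_bipath_def by blast

lemma valid_triplet_obtains_temporal_bipath:
  assumes "valid_triplet E lab s v u a d"
  obtains xs f g where "temporal_bipath E lab xs f g" "hd xs = s" "last xs = v"
    and "\<forall>i. i < length xs - 1 \<longrightarrow> ereal (f i) \<le> a \<and> d \<le> ereal (g i)"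
proof (cases "v = s \<and> u = None \<and> a = -\<infinity> \<and> d = \<infinity>")
  case True
  then show ?thesis
    using that[OF temporal_bipath_singleton[of E lab s]] by simp
next
  case False
  then obtain u' where "bipath_with E lab s v u' a d"
    using assms unfolding valid_triplet_def by blast
  then obtain xs f g where path: "temporal_bipath E lab xs f g" "length xs \<ge> 2"
      "hd xs = s" "last xs = v"
    and arrival: "ereal (f (length xs - 2)) \<le> a"
    and departure: "d \<le> ereal (g (length xs - 2))"
    unfolding bipath_with_iff_temporal_bipath by blast
  have "ereal (f i) \<le> a \<and> d \<le> ereal (g i)" if "i < length xs - 1" for i
  proof -
    have "i \<le> length xs - 2" "length xs - 2 < length xs - 1"
      using path(2) that by auto
    then have "f i \<le> f (length xs - 2)" "g (length xs - 2) \<le> g i"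
      using path(1) unfolding temporal_bipath_def by blast+
    then have "ereal (f i) \<le> ereal (f (length xs - 2))" "ereal (g (length xs - 2)) \<le> ereal (g i)"
      by simp_all
    then show ?thesis
      using arrival departure by (meson order_trans)
  qed
  then show ?thesis using that path by blast
qed

lemma temporal_bipath_snoc:
  assumes path: "temporal_bipath E lab xs f g" and "xs \<noteq> []" "last xs = v"
    and edge: "{v, w} \<in> E" "a' \<in> lab {v, w}" "d' \<in> lab {v, w}"
    and bounds: "\<forall>i. i < length xs - 1 \<longrightarrow> f i \<le> a' \<and> d' \<le> g i"
  shows "temporal_bipath E lab (xs @ [w]) (f(length xs - 1 := a')) (g(length xs - 1 := d'))"
proof -
  define n where "n = length xs - 1"
  have len: "length xs = Suc n" and last_nth: "xs ! n = v"
    using \<open>xs \<noteq> []\<close> \<open>last xs = v\<close> by (auto simp: n_def last_conv_nth)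
  have new_edge: "{(xs @ [w]) ! n, (xs @ [w]) ! Suc n} = {v, w}"
    using len last_nth by (simp add: nth_append)
  have old_edge: "{(xs @ [w]) ! i, (xs @ [w]) ! Suc i} = {xs ! i, xs ! Suc i}" if "i < n" for i
    using that len by (simp add: nth_append)
  have below_or_last: "i < n \<or> i = n" if "i < Suc n" for i
    using that by linarith
  from path have old_path: "graph_path E xs"
    and f_lab: "\<forall>i<n. f i \<in> lab {xs ! i, xs ! Suc i}"
    and f_mono: "\<forall>i j. i \<le> j \<and> j < n \<longrightarrow> f i \<le> f j"
    and g_lab: "\<forall>i<n. g i \<in> lab {xs ! i, xs ! Suc i}"
    and g_mono: "\<forall>i j. i \<le> j \<and> j < n \<longrightarrow> g j \<le> g i"
    unfolding temporal_bipath_def n_def by auto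
  have "graph_path E (xs @ [w])"
    unfolding graph_path_def
  proof (intro conjI allI impI)
    fix i assume "Suc i < length (xs @ [w])"
    then consider "i < n" | "i = n" using len below_or_last by fastforce
    then show "{(xs @ [w]) ! i, (xs @ [w]) ! Suc i} \<in> E"
    proof cases
      case 1
      then show ?thesis using old_path len old_edge unfolding graph_path_def by auto
    qed (simp add: new_edge edge(1))
  qed simp
  moreover have "(f(n := a')) i \<in> lab {(xs @ [w]) ! i, (xs @ [w]) ! Suc i}"
    and "(g(n := d')) i \<in> lab {(xs @ [w]) ! i, (xs @ [w]) ! Suc i}"
    if "i < Suc n" for i
    using below_or_last[OF that] f_lab g_lab old_edge new_edge edge(2,3) by auto
  moreover have "(f(n := a')) i \<le> (f(n := a')) j"
    and "(g(n := d')) j \<le> (g(n := d')) i"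
    if "i \<le> j" "j < Suc n" for i j
    using that below_or_last[OF that(2)] f_mono g_mono bounds n_def by auto
  ultimately show ?thesis
    unfolding temporal_bipath_def n_def[symmetric] by (simp add: len)
qed

theorem lemma3:
  fixes V :: "'v set" and E :: "'v set set" and lab :: "'v set \<Rightarrow> nat set"
    and s v w :: 'v and u :: "'v option" and a d :: ereal and a' d' :: nat
  assumes "temporal_graph V E"
    and "s \<in> V" and "v \<in> V"
    and "valid_triplet E lab s v u a d"
    and "{v, w} \<in> E" and "u \<noteq> Some w"
    and "a' \<in> lab {v, w}" and "ereal a' \<ge> a"
    and "\<forall>t \<in> lab {v, w}. ereal t \<ge> a \<longrightarrow> a' \<le> t"
    and "d' \<in> lab {v, w}" and "ereal d' \<le> d"
    and "\<forall>t \<in> lab {v, w}. ereal t \<le> d \<longrightarrow> t \<le> d'"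
  shows "valid_triplet E lab s w (Some v) (ereal a') (ereal d')"
proof -
  obtain xs f g where path: "temporal_bipath E lab xs f g" "hd xs = s" "last xs = v"
    and bounds: "\<forall>i. i < length xs - 1 \<longrightarrow> ereal (f i) \<le> a \<and> d \<le> ereal (g i)"
    using valid_triplet_obtains_temporal_bipath[OF assms(4)] .
  have "xs \<noteq> []"
    using path(1) by (simp add: temporal_bipath_def graph_path_def)
  have "\<forall>i. i < length xs - 1 \<longrightarrow> f i \<le> a' \<and> d' \<le> g i"
  proof (intro allI impI)
    fix i assume "i < length xs - 1"
    then have "ereal (f i) \<le> ereal a'" "ereal d' \<le> ereal (g i)"
      using bounds assms(8,11) by (meson order_trans)+
    then show "f i \<le> a' \<and> d' \<le> g i" by simp
  qed
  then have "temporal_bipath E lab (xs @ [w]) (f(length xs - 1 := a')) (g(length xs - 1 := d'))"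
    using temporal_bipath_snoc[OF path(1) \<open>xs \<noteq> []\<close> path(3) assms(5,7,10)] by blast
  moreover have "(xs @ [w]) ! (length (xs @ [w]) - 2) = v"
    using \<open>xs \<noteq> []\<close> path(3) by (simp add: nth_append last_conv_nth)
  ultimately have "bipath_with E lab s w v (ereal a') (ereal d')"
    unfolding bipath_with_iff_temporal_bipath
    using \<open>xs \<noteq> []\<close> path(2) by (intro exI[of _ "xs @ [w]"] exI conjI) (auto simp: Suc_le_eq)
  then show ?thesis by (simp add: valid_triplet_def)
qed

end
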